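(* Let $f:[0,\infty)\to\mathbb{R}$ be a circularly symmetric surface brightness profile satisfying condition (1) and condition (2a) below, and let $p>0$. Let $f_{\rm c}$ be the convolution (over $\mathbb{R}^2$) of $f$ with the normalized gaussian beam $g_b(x,y)=\frac{p}{\pi}\,e^{-p(x^2+y^2)}$; $f_{\rm c}$ is again circularly symmetric. Then for every $r\ge 0$ \[ f_{\rm c}(r)=\frac{p}{\pi}\,e^{-pr^2}\sum_{n=0}^\infty \frac{c_{2n}(p)\,p^{2n}}{(n!)^2}\,r^{2n}. \] If moreover $f$ satisfies condition (2b), then for every $r\ge0$ \[ f_{\rm c}(r)=\frac{p}{\pi}\,e^{-pr^2}\sum_{n=0}^\infty (-1)^n\frac{c_{2n}\,p^n}{n!}\,L_n(pr^2), \] where $L_n(x)=\sum_{k=0}^n(-1)^k\binom{n}{k}\frac{x^k}{k!}$ is the Laguerre polynomial of degree $n$.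
   Context: A circularly symmetric function on the plane is identified with a function of the radius $r$. For $n\in\mathbb{N}_0$ define the radial moments $c_n=2\pi\int_0^\infty f(r)\,r^{n+1}\,dr$ and, for $p\ge0$, the generalized radial moments $c_n(p)=2\pi\int_0^\infty f(r)\,r^{n+1}e^{-pr^2}\,dr$. Condition (1): there is a constant $F$ with $0\le f(r)\le F$ for all $r\in[0,\infty)$, $c_0$ exists and $c_0>0$. Condition (2a): $c_{2n}$ exists for all $n\in\mathbb{N}_0$ and $c_n^{1/n}=o(n)$ as $n\to\infty$. Condition (2b): $c_{2n}$ exists for all $n\in\mathbb{N}_0$ and $c_n^{1/n}=o(n^{1/2})$ as $n\to\infty$. *)

theory Defs
  imports "HOL-Analysis.Analysis" "HOL-Library.Landau_Symbols"
begin

definition radial_moment :: "(real \<Rightarrow> real) \<Rightarrow> nat \<Rightarrow> real" where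
  "radial_moment f n = 2 * pi * (LBINT r:{0..}. f r * r ^ (n + 1))"

definition gen_radial_moment :: "(real \<Rightarrow> real) \<Rightarrow> nat \<Rightarrow> real \<Rightarrow> real" where
  "gen_radial_moment f n p = 2 * pi * (LBINT r:{0..}. f r * r ^ (n + 1) * exp (- p * r\<^sup>2))"

definition moment_exists :: "(real \<Rightarrow> real) \<Rightarrow> nat \<Rightarrow> bool" where
  "moment_exists f n \<longleftrightarrow> set_integrable lborel {0..} (\<lambda>r. f r * r ^ (n + 1))"

definition cond1 :: "(real \<Rightarrow> real) \<Rightarrow> bool" where
  "cond1 f \<longleftrightarrow> (\<exists>F. \<forall>r\<ge>0. 0 \<le> f r \<and> f r \<le> F) \<and> moment_exists f 0 \<and> radial_moment f 0 > 0"

definition cond2a :: "(real \<Rightarrow> real) \<Rightarrow> bool" where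
  "cond2a f \<longleftrightarrow> (\<forall>n. moment_exists f (2 * n)) \<and>
     (\<lambda>n. radial_moment f n powr (1 / real n)) \<in> o(\<lambda>n. real n)"

definition cond2b :: "(real \<Rightarrow> real) \<Rightarrow> bool" where
  "cond2b f \<longleftrightarrow> (\<forall>n. moment_exists f (2 * n)) \<and>
     (\<lambda>n. radial_moment f n powr (1 / real n)) \<in> o(\<lambda>n. sqrt (real n))"

definition gauss_beam :: "real \<Rightarrow> real \<times> real \<Rightarrow> real" where
  "gauss_beam p z = p / pi * exp (- p * (fst z ^ 2 + snd z ^ 2))"

definition conv_beam :: "(real \<Rightarrow> real) \<Rightarrow> real \<Rightarrow> real \<times> real \<Rightarrow> real" where
  "conv_beam f p z = (LINT w|lborel. f (norm w) * gauss_beam p (z - w))"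

definition laguerre :: "nat \<Rightarrow> real \<Rightarrow> real" where
  "laguerre n x = (\<Sum>k\<le>n. (-1) ^ k * real (n choose k) * x ^ k / fact k)"

end

theory Submission
  imports Defs "HOL-Probability.Distributions"
begin

(*
  Expanding |z - w|^2, the convolution is (p/pi) e^(-p r^2) times the integral of the radial
  function g(|w|) = f(|w|) e^(-p |w|^2) against e^(2p z.w).  As g is even, the exponential may be
  replaced by cosh(2p z.w), whose Taylor series has nonnegative terms and is integrated termwise.
  The weight (z.w)^(2n) is homogeneous of degree 2n, so pushing it forward along the norm splits
  its integral against g(|w|) into a radial moment of g times a constant, and testing with a
  Gaussian identifies that constant.  The result is the first series; it is the expansion of the
  radial integral of 2 pi f(s) s e^(-p s^2) I_0(2 p r s).

  The Cauchy product of e^(-y) with sum (x y)^n/(n!)^2 is sum (-y)^n/n! L_n(x).  Inserting it with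
  y = p s^2 into that radial integral gives the Laguerre series; the sum may be taken out of the
  integral because |L_n(x)| <= 2^n e^x and condition (2b) makes sum c_(2n) (2p)^n/n! converge.
*)

section \<open>Gaussian integrals\<close>

definition gaussian_moment :: "nat \<Rightarrow> real" where
  "gaussian_moment k = (if even k then sqrt pi * fact k / (2 ^ k * fact (k div 2)) else 0)"

lemma has_bochner_integral_gaussian_moment:
  "has_bochner_integral lborel (\<lambda>x::real. exp (- x\<^sup>2) * x ^ k) (gaussian_moment k)"
proof (cases "even k")
  case True
  then obtain j where k: "k = 2 * j" by (auto elim: evenE)
  show ?thesis
    using has_bochner_integral_even_function[OF gaussian_moment_even_pos[of j]]
    by (simp add: k gaussian_moment_def)
next
  case False
  then obtain j where k: "k = 2 * j + 1" by (auto elim: oddE)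
  show ?thesis
    using has_bochner_integral_odd_function[OF gaussian_moment_odd_pos[of j]]
    by (simp add: k gaussian_moment_def)
qed

lemma has_bochner_integral_lborel_pair:
  fixes F G :: "real \<Rightarrow> real"
  assumes F: "has_bochner_integral lborel F A" and G: "has_bochner_integral lborel G B"
  shows "has_bochner_integral lborel (\<lambda>w. F (fst w) * G (snd w)) (A * B)"
proof -
  have iF: "integrable lborel F" and iG: "integrable lborel G"
    using F G by (auto simp: has_bochner_integral_iff)
  then have [measurable]: "F \<in> borel_measurable borel" "G \<in> borel_measurable borel"
    by auto
  have int: "integrable (lborel \<Otimes>\<^sub>M lborel) (\<lambda>w. F (fst w) * G (snd w))"
  proof (rule lborel_pair.Fubini_integrable)
    have "integrable lborel (\<lambda>x. norm (F x) * (\<integral>y. norm (G y) \<partial>lborel))"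
      using iF by (intro integrable_mult_left) auto
    then show "integrable lborel (\<lambda>x. \<integral>y. norm (F (fst (x, y)) * G (snd (x, y))) \<partial>lborel)"
      by (simp add: abs_mult)
    show "AE x in lborel. integrable lborel (\<lambda>y. F (fst (x, y)) * G (snd (x, y)))"
      using iG by (auto intro!: integrable_mult_right)
  qed measurable
  have "(\<integral>w. F (fst w) * G (snd w) \<partial>(lborel \<Otimes>\<^sub>M lborel)) = (\<integral>x. (\<integral>y. F x * G y \<partial>lborel) \<partial>lborel)"
    using lborel_pair.integral_fst[of "\<lambda>x y. F x * G y"] int by (simp add: case_prod_beta')
  also have "\<dots> = A * B"
    using F G by (simp add: has_bochner_integral_integral_eq)
  finally show ?thesis
    using int by (simp add: has_bochner_integral_iff lborel_prod)
qed

lemma sum_binomial_gaussian_moments: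
  "(\<Sum>k\<le>2*n. real (2*n choose k) * a ^ k * b ^ (2*n - k) * (gaussian_moment k * gaussian_moment (2*n - k)))
     = pi * fact (2*n) / (4^n * fact n) * (a\<^sup>2 + b\<^sup>2) ^ n"
proof -
  let ?T = "\<lambda>k. real (2*n choose k) * a ^ k * b ^ (2*n - k) * (gaussian_moment k * gaussian_moment (2*n - k))"
  have "(\<Sum>k\<le>2*n. ?T k) = (\<Sum>k\<in>(\<lambda>j. 2*j) ` {..n}. ?T k)"
    by (rule sum.mono_neutral_right) (auto simp: gaussian_moment_def elim!: evenE)
  also have "\<dots> = (\<Sum>j\<le>n. ?T (2*j))"
    by (subst sum.reindex) (auto simp: inj_on_def)
  also have "\<dots> = (\<Sum>j\<le>n. pi * fact (2*n) / (4^n * fact n) * (real (n choose j) * (a\<^sup>2) ^ j * (b\<^sup>2) ^ (n - j)))"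
  proof (rule sum.cong[OF refl])
    fix j assume "j \<in> {..n}"
    then have j: "j \<le> n" by simp
    have diff: "2*n - 2*j = 2*(n-j)" by simp
    have "real (2*n choose (2*j)) = fact (2*n) / (fact (2*j) * fact (2*(n-j)))"
      using j by (subst binomial_fact) (auto simp: diff)
    moreover have "real (n choose j) = fact n / (fact j * fact (n-j))"
      using j by (rule binomial_fact)
    moreover have "(2::real) ^ (2*j) * 2 ^ (2*(n-j)) = 4 ^ n"
      using j by (simp add: power_add[symmetric] power_mult)
    ultimately show "?T (2*j) = pi * fact (2*n) / (4^n * fact n) * (real (n choose j) * (a\<^sup>2) ^ j * (b\<^sup>2) ^ (n - j))"
      unfolding gaussian_moment_def diff
      by (simp add: power_mult[symmetric] field_simps mult_ac)
  qed
  also have "\<dots> = pi * fact (2*n) / (4^n * fact n) * (a\<^sup>2 + b\<^sup>2) ^ n"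
    by (simp add: binomial_ring sum_distrib_left)
  finally show ?thesis .
qed

lemma power2_norm_prod: "(norm (w :: real \<times> real))\<^sup>2 = (fst w)\<^sup>2 + (snd w)\<^sup>2"
  by (simp add: norm_prod_def)

lemma has_bochner_integral_gaussian_inner_power:
  fixes z :: "real \<times> real"
  shows "has_bochner_integral lborel (\<lambda>w. exp (- (norm w)\<^sup>2) * ((z \<bullet> w) ^ (2*n) / fact (2*n)))
     (pi * ((norm z)\<^sup>2 / 4) ^ n / fact n)"
proof -
  obtain a b where z: "z = (a, b)" by fastforce
  have expand: "exp (- (norm w)\<^sup>2) * (z \<bullet> w) ^ (2*n) =
    (\<Sum>k\<le>2*n. real (2*n choose k) * a ^ k * b ^ (2*n - k) *
       ((exp (- (fst w)\<^sup>2) * fst w ^ k) * (exp (- (snd w)\<^sup>2) * snd w ^ (2*n-k))))" for w :: "real \<times> real"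
  proof -
    have "exp (- (norm w)\<^sup>2) = exp (- (fst w)\<^sup>2) * exp (- (snd w)\<^sup>2)"
      by (simp add: power2_norm_prod exp_add[symmetric])
    then show ?thesis
      by (simp add: z inner_prod_def binomial_ring sum_distrib_left power_mult_distrib mult_ac)
  qed
  have "has_bochner_integral lborel (\<lambda>w. exp (- (norm w)\<^sup>2) * (z \<bullet> w) ^ (2*n))
    (\<Sum>k\<le>2*n. real (2*n choose k) * a ^ k * b ^ (2*n - k) * (gaussian_moment k * gaussian_moment (2*n - k)))"
    unfolding expand
    by (intro has_bochner_integral_sum has_bochner_integral_mult_right has_bochner_integral_lborel_pair
        has_bochner_integral_gaussian_moment)
  then have "has_bochner_integral lborel (\<lambda>w. exp (- (norm w)\<^sup>2) * (z \<bullet> w) ^ (2*n) / fact (2*n))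
    (pi * fact (2*n) / (4^n * fact n) * (a\<^sup>2 + b\<^sup>2) ^ n / fact (2*n))"
    unfolding sum_binomial_gaussian_moments by (rule has_bochner_integral_divide_zero)
  moreover have "(a\<^sup>2 + b\<^sup>2) ^ n = ((norm z)\<^sup>2) ^ n"
    by (simp add: z power2_norm_prod)
  ultimately show ?thesis
    by (simp add: power_divide)
qed

lemma gauss_beam_eq_normal_density:
  assumes "p > 0"
  shows "gauss_beam p (z - w) =
    normal_density (fst z) (1 / sqrt (2 * p)) (fst w) * normal_density (snd z) (1 / sqrt (2 * p)) (snd w)"
  using assms
  by (simp add: gauss_beam_def normal_density_def power_divide power2_commute[of "fst z"]
      power2_commute[of "snd z"] real_sqrt_mult[symmetric] exp_add[symmetric] field_simps)

lemma has_bochner_integral_gauss_beam: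
  assumes "p > 0"
  shows "has_bochner_integral lborel (\<lambda>w. gauss_beam p (z - w)) 1"
  using has_bochner_integral_lborel_pair[of "normal_density (fst z) (1 / sqrt (2 * p))" 1
      "normal_density (snd z) (1 / sqrt (2 * p))" 1] assms
  by (simp add: gauss_beam_eq_normal_density has_bochner_integral_iff)

section \<open>Radial integration\<close>

lemma nn_integral_lborel_scaleR:
  fixes h :: "'a::euclidean_space \<Rightarrow> ennreal"
  assumes [measurable]: "h \<in> borel_measurable borel" and "c \<noteq> 0"
  shows "(\<integral>\<^sup>+x. h x \<partial>lborel) = ennreal (\<bar>c\<bar> ^ DIM('a)) * (\<integral>\<^sup>+x. h (c *\<^sub>R x) \<partial>lborel)"
  by (subst lborel_affine[OF \<open>c \<noteq> 0\<close>, of 0])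
     (simp add: nn_integral_density nn_integral_distr nn_integral_cmult)

lemma nn_integral_cball_homogeneous:
  fixes h :: "'a::euclidean_space \<Rightarrow> real"
  assumes [measurable]: "h \<in> borel_measurable borel"
    and hom: "\<And>t x. 0 < t \<Longrightarrow> h (t *\<^sub>R x) = t ^ m * h x"
  shows "(\<integral>\<^sup>+w\<in>cball 0 a. ennreal (h w) \<partial>lborel) =
    ennreal (if 0 \<le> a then a ^ (m + DIM('a)) else 0) * (\<integral>\<^sup>+w\<in>cball 0 1. ennreal (h w) \<partial>lborel)"
proof (cases "0 < a")
  case True
  have [measurable]: "cball 0 r \<in> sets borel" for r :: real
    by (simp add: borel_closed)
  have "(\<integral>\<^sup>+w\<in>cball 0 a. ennreal (h w) \<partial>lborel) =
    ennreal (a ^ DIM('a)) * (\<integral>\<^sup>+w. ennreal (h (a *\<^sub>R w)) * indicator (cball 0 a) (a *\<^sub>R w) \<partial>lborel)"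
    using True by (subst nn_integral_lborel_scaleR[of _ a]) auto
  also have "(\<lambda>w. ennreal (h (a *\<^sub>R w)) * indicator (cball 0 a) (a *\<^sub>R w)) =
      (\<lambda>w. ennreal (a ^ m) * (ennreal (h w) * indicator (cball 0 1) w))"
    using True by (auto simp: fun_eq_iff hom ennreal_mult' split: split_indicator)
  also have "(\<integral>\<^sup>+w. ennreal (a ^ m) * (ennreal (h w) * indicator (cball 0 1) w) \<partial>lborel) =
      ennreal (a ^ m) * (\<integral>\<^sup>+w\<in>cball 0 1. ennreal (h w) \<partial>lborel)"
    by (rule nn_integral_cmult) measurable
  also have "ennreal (a ^ DIM('a)) * (ennreal (a ^ m) * (\<integral>\<^sup>+w\<in>cball 0 1. ennreal (h w) \<partial>lborel)) =
      ennreal (a ^ (m + DIM('a))) * (\<integral>\<^sup>+w\<in>cball 0 1. ennreal (h w) \<partial>lborel)"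
    using True by (simp add: mult.assoc[symmetric] ennreal_mult[symmetric] power_add mult.commute)
  finally show ?thesis
    using True by simp
next
  case False
  have "AE w in lborel. ennreal (h w) * indicator (cball 0 a) w = 0"
    using AE_lborel_singleton[of 0]
  proof eventually_elim
    case (elim w)
    then have "0 < norm w" by simp
    with False have "\<not> norm w \<le> a" by linarith
    then show ?case by simp
  qed
  then show ?thesis
    using False by (simp add: nn_integral_0_iff_AE)
qed

lemma nn_integral_power_atMost:
  assumes "0 < k"
  shows "(\<integral>\<^sup>+s\<in>{..a}. ennreal (real k * s ^ (k - 1)) * indicator {0..} s \<partial>lborel) =
    ennreal (if 0 \<le> a then a ^ k else 0)"
proof (cases "0 \<le> a")
  case True
  have "(\<integral>\<^sup>+s\<in>{..a}. ennreal (real k * s ^ (k - 1)) * indicator {0..} s \<partial>lborel) =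
      (\<integral>\<^sup>+s. ennreal (real k * s ^ (k - 1)) * indicator {0..a} s \<partial>lborel)"
    by (intro nn_integral_cong) (auto split: split_indicator)
  also have "\<dots> = ennreal (a ^ k - 0 ^ k)"
    using True assms
    by (intro nn_integral_FTC_Icc) (auto intro!: derivative_eq_intros simp: power_0_left)
  finally show ?thesis
    using True assms by simp
next
  case False
  then show ?thesis
    by (simp add: nn_integral_0_iff_AE split: split_indicator)
qed

lemma distr_norm_density_homogeneous:
  fixes h :: "'a::euclidean_space \<Rightarrow> real"
  assumes [measurable]: "h \<in> borel_measurable borel"
    and hom: "\<And>t x. 0 < t \<Longrightarrow> h (t *\<^sub>R x) = t ^ m * h x"
    and finite: "(\<integral>\<^sup>+w\<in>cball 0 1. ennreal (h w) \<partial>lborel) < \<infinity>"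
  defines "A \<equiv> \<integral>\<^sup>+w\<in>cball 0 1. ennreal (h w) \<partial>lborel" and "k \<equiv> m + DIM('a)"
  shows "distr (density lborel h) borel norm =
    density lborel (\<lambda>s. A * ennreal (real k * s ^ (k - 1)) * indicator {0..} s)"
  (is "?M = ?N")
proof (rule measure_eqI_generator_eq[where E="range atMost" and \<Omega>=UNIV and A="\<lambda>i. {..real i}"])
  have k: "0 < k" unfolding k_def by simp
  have M: "emeasure ?M {..a} = A * ennreal (if 0 \<le> a then a ^ k else 0)" for a :: real
  proof -
    have "norm -` {..a} \<inter> space (density lborel h) = cball 0 a"
      by auto
    then show ?thesis
      using nn_integral_cball_homogeneous[OF _ hom, of a]
      by (simp add: emeasure_distr emeasure_density A_def k_def mult.commute)
  qed
  have N: "emeasure ?N {..a} = A * ennreal (if 0 \<le> a then a ^ k else 0)" for a :: real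
  proof -
    have "emeasure ?N {..a} =
        (\<integral>\<^sup>+s. A * (ennreal (real k * s ^ (k - 1)) * indicator {0..} s * indicator {..a} s) \<partial>lborel)"
      by (subst emeasure_density) (auto simp: mult.assoc)
    also have "\<dots> = A * ennreal (if 0 \<le> a then a ^ k else 0)"
      using nn_integral_power_atMost[OF k, of a] by (simp add: nn_integral_cmult mult_ac)
    finally show ?thesis .
  qed
  show "emeasure ?M X = emeasure ?N X" if "X \<in> range atMost" for X
    using that M N by auto
  show "emeasure ?M {..real i} \<noteq> \<infinity>" for i
    using M finite by (simp add: A_def ennreal_mult_eq_top_iff)
qed (auto simp: Int_stable_def borel_eq_atMost intro: real_arch_simple)

lemma nn_integral_radial_homogeneous:
  fixes h :: "'a::euclidean_space \<Rightarrow> real" and g :: "real \<Rightarrow> ennreal"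
  assumes [measurable]: "h \<in> borel_measurable borel" "g \<in> borel_measurable borel"
    and hom: "\<And>t x. 0 < t \<Longrightarrow> h (t *\<^sub>R x) = t ^ m * h x"
    and finite: "(\<integral>\<^sup>+w\<in>cball 0 1. ennreal (h w) \<partial>lborel) < \<infinity>"
  shows "(\<integral>\<^sup>+w. g (norm w) * ennreal (h w) \<partial>lborel) =
    ennreal (real (m + DIM('a))) * (\<integral>\<^sup>+w\<in>cball 0 1. ennreal (h w) \<partial>lborel) *
    (\<integral>\<^sup>+s\<in>{0..}. g s * ennreal (s ^ (m + DIM('a) - 1)) \<partial>lborel)"
proof -
  define A where "A = (\<integral>\<^sup>+w\<in>cball 0 1. ennreal (h w) \<partial>lborel)"
  define k where "k = m + DIM('a)"
  have "(\<integral>\<^sup>+w. g (norm w) * ennreal (h w) \<partial>lborel) = (\<integral>\<^sup>+s. g s \<partial>distr (density lborel h) borel norm)"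
    by (simp add: nn_integral_distr nn_integral_density mult.commute)
  also have "\<dots> = (\<integral>\<^sup>+s. g s \<partial>density lborel (\<lambda>s. A * ennreal (real k * s ^ (k - 1)) * indicator {0..} s))"
    unfolding A_def k_def by (simp only: distr_norm_density_homogeneous[OF assms(1) hom finite])
  also have "\<dots> = (\<integral>\<^sup>+s. (ennreal (real k) * A) * (g s * ennreal (s ^ (k - 1)) * indicator {0..} s) \<partial>lborel)"
    by (auto simp: nn_integral_density ennreal_mult' mult_ac intro!: nn_integral_cong split: split_indicator)
  also have "\<dots> = ennreal (real k) * A * (\<integral>\<^sup>+s\<in>{0..}. g s * ennreal (s ^ (k - 1)) \<partial>lborel)"
    by (rule nn_integral_cmult) measurable
  finally show ?thesis
    unfolding A_def k_def .
qed

lemma nn_integral_cball_inner_power_finite: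
  fixes z :: "'a::euclidean_space"
  shows "(\<integral>\<^sup>+w\<in>cball 0 1. ennreal (c * (z \<bullet> w) ^ m) \<partial>lborel) < \<infinity>"
proof -
  have "(\<integral>\<^sup>+w\<in>cball 0 1. ennreal (c * (z \<bullet> w) ^ m) \<partial>lborel) \<le>
      (\<integral>\<^sup>+w. ennreal (\<bar>c\<bar> * norm z ^ m) * indicator (cball (0::'a) 1) w \<partial>lborel)"
  proof (rule nn_integral_mono)
    fix w :: 'a
    have "c * (z \<bullet> w) ^ m \<le> \<bar>c\<bar> * norm z ^ m" if "norm w \<le> 1"
    proof -
      have "\<bar>z \<bullet> w\<bar> \<le> norm z"
        using Cauchy_Schwarz_ineq2[of z w] mult_left_le[of "norm w" "norm z"] that by simp
      then have "\<bar>c\<bar> * \<bar>z \<bullet> w\<bar> ^ m \<le> \<bar>c\<bar> * norm z ^ m"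
        by (intro mult_left_mono power_mono) simp_all
      moreover have "c * (z \<bullet> w) ^ m \<le> \<bar>c\<bar> * \<bar>z \<bullet> w\<bar> ^ m"
        by (metis abs_ge_self abs_mult power_abs)
      ultimately show ?thesis
        by linarith
    qed
    then show "ennreal (c * (z \<bullet> w) ^ m) * indicator (cball 0 1) w \<le> ennreal (\<bar>c\<bar> * norm z ^ m) * indicator (cball 0 1) w"
      by (cases "norm w \<le> 1") (auto intro: ennreal_leI)
  qed
  also have "\<dots> = ennreal (\<bar>c\<bar> * norm z ^ m) * emeasure lborel (cball (0::'a) 1)"
    by (rule nn_integral_cmult_indicator) (simp add: borel_closed)
  also have "\<dots> < \<infinity>"
    using emeasure_bounded_finite[of "cball (0::'a) 1"] by (simp add: ennreal_mult_less_top)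
  finally show ?thesis .
qed

lemma nn_integral_radial_inner_power:
  fixes z :: "real \<times> real" and g :: "real \<Rightarrow> ennreal"
  assumes [measurable]: "g \<in> borel_measurable borel"
  shows "(\<integral>\<^sup>+w. g (norm w) * ennreal ((z \<bullet> w) ^ (2*n) / fact (2*n)) \<partial>lborel) =
    ennreal (2 * pi * ((norm z)\<^sup>2 / 4) ^ n / (fact n)\<^sup>2) * (\<integral>\<^sup>+s\<in>{0..}. g s * ennreal (s ^ (2*n+1)) \<partial>lborel)"
proof -
  define A where
    "A = ennreal (real (2*n + 2)) * (\<integral>\<^sup>+w\<in>cball 0 1. ennreal ((z \<bullet> w) ^ (2*n) / fact (2*n)) \<partial>lborel)"
  have radial: "(\<integral>\<^sup>+w. r (norm w) * ennreal ((z \<bullet> w) ^ (2*n) / fact (2*n)) \<partial>lborel) =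
      A * (\<integral>\<^sup>+s\<in>{0..}. r s * ennreal (s ^ (2*n+1)) \<partial>lborel)"
    if [measurable]: "r \<in> borel_measurable borel" for r :: "real \<Rightarrow> ennreal"
    using nn_integral_radial_homogeneous[of "\<lambda>w. (z \<bullet> w) ^ (2*n) / fact (2*n)" r "2*n"]
      nn_integral_cball_inner_power_finite[of "1 / fact (2*n)" z "2*n"]
    by (simp add: A_def power_mult_distrib)
  \<comment> \<open>The constant \<open>A\<close> is determined by taking a Gaussian for \<open>r\<close>.\<close>
  define V where "V = pi * ((norm z)\<^sup>2 / 4) ^ n / fact n"
  have "ennreal V = (\<integral>\<^sup>+w. ennreal (exp (- (norm w)\<^sup>2) * ((z \<bullet> w) ^ (2*n) / fact (2*n))) \<partial>lborel)"
    using has_bochner_integral_gaussian_inner_power[of z n]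
    by (subst nn_integral_eq_integral) (auto simp: V_def has_bochner_integral_iff zero_le_mult_iff)
  also have "\<dots> = A * (\<integral>\<^sup>+s\<in>{0..}. ennreal (exp (- s\<^sup>2)) * ennreal (s ^ (2*n+1)) \<partial>lborel)"
    by (subst radial[symmetric]) (measurable, rule nn_integral_cong, rule ennreal_mult', simp)
  also have "(\<integral>\<^sup>+s\<in>{0..}. ennreal (exp (- s\<^sup>2)) * ennreal (s ^ (2*n+1)) \<partial>lborel) =
      (\<integral>\<^sup>+s. ennreal (indicator {0..} s *\<^sub>R (exp (- s\<^sup>2) * s ^ (2*n+1))) \<partial>lborel)"
    by (intro nn_integral_cong) (auto simp: ennreal_mult' split: split_indicator)
  also have "\<dots> = ennreal (fact n / 2)"
    using gaussian_moment_odd_pos[of n]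
    by (subst nn_integral_eq_integral) (auto simp: has_bochner_integral_iff split: split_indicator)
  finally have "A = ennreal V / ennreal (fact n / 2)"
    by (simp add: ennreal_mult_divide_eq)
  also have "\<dots> = ennreal (2 * pi * ((norm z)\<^sup>2 / 4) ^ n / (fact n)\<^sup>2)"
    by (simp add: divide_ennreal V_def power2_eq_square)
  finally show ?thesis
    using radial[OF assms] by simp
qed

lemma cosh_sums_even: "(\<lambda>n. x ^ (2*n) / fact (2*n)) sums cosh (x::real)"
proof -
  define f where "f k = (if even k then x ^ k / fact k else 0)" for k
  have "f sums cosh x"
    using cosh_converges[of x] unfolding f_def by (simp add: divide_inverse mult.commute cong: if_cong)
  moreover have "odd k" if "k \<notin> range (\<lambda>n. 2 * n)" for k
    using that by (auto elim: evenE)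
  ultimately have "(\<lambda>n. f (2*n)) sums cosh x"
    by (subst sums_mono_reindex) (auto simp: strict_mono_def f_def)
  then show ?thesis
    by (simp add: f_def)
qed

lemma nn_integral_exp_inner_eq_cosh:
  fixes z :: "'a::euclidean_space" and g :: "real \<Rightarrow> ennreal"
  assumes [measurable]: "g \<in> borel_measurable borel"
  shows "(\<integral>\<^sup>+w. g (norm w) * ennreal (exp (z \<bullet> w)) \<partial>lborel) =
    (\<integral>\<^sup>+w. g (norm w) * ennreal (cosh (z \<bullet> w)) \<partial>lborel)"
proof -
  define I where "I = (\<integral>\<^sup>+w. g (norm w) * ennreal (exp (z \<bullet> w)) \<partial>lborel)"
  have reflect: "(\<integral>\<^sup>+w. g (norm w) * ennreal (exp (- (z \<bullet> w))) \<partial>lborel) = I"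
    using nn_integral_lborel_scaleR[of "\<lambda>w. g (norm w) * ennreal (exp (- (z \<bullet> w)))" "-1"]
    by (simp add: I_def)
  have ennreal_cosh: "ennreal (cosh u) = ennreal (1/2) * (ennreal (exp u) + ennreal (exp (- u)))" for u :: real
  proof -
    have "ennreal (cosh u) = ennreal (1/2 * (exp u + exp (- u)))"
      by (simp add: cosh_def)
    also have "\<dots> = ennreal (1/2) * ennreal (exp u + exp (- u))"
      by (rule ennreal_mult') simp
    finally show ?thesis
      by (simp only: ennreal_plus[OF exp_ge_zero exp_ge_zero])
  qed
  have "(\<integral>\<^sup>+w. g (norm w) * ennreal (cosh (z \<bullet> w)) \<partial>lborel) =
      (\<integral>\<^sup>+w. ennreal (1/2) * (g (norm w) * ennreal (exp (z \<bullet> w)) + g (norm w) * ennreal (exp (- (z \<bullet> w)))) \<partial>lborel)"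
    by (intro nn_integral_cong) (simp add: ennreal_cosh distrib_left mult_ac)
  also have "\<dots> = ennreal (1/2) * (I + I)"
    by (simp add: nn_integral_cmult nn_integral_add reflect I_def)
  also have "\<dots> = (ennreal (1/2) * 2) * I"
    by (simp add: mult_2[symmetric] mult.assoc)
  also have "ennreal (1/2) * 2 = 1"
    using ennreal_mult[of "1/2" 2] by simp
  finally show ?thesis
    by (simp add: I_def)
qed

lemma nn_integral_radial_exp_inner:
  fixes z :: "real \<times> real" and g :: "real \<Rightarrow> ennreal"
  assumes [measurable]: "g \<in> borel_measurable borel"
  shows "(\<integral>\<^sup>+w. g (norm w) * ennreal (exp (z \<bullet> w)) \<partial>lborel) =
    (\<Sum>n. ennreal (2 * pi * ((norm z)\<^sup>2 / 4) ^ n / (fact n)\<^sup>2) *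
      (\<integral>\<^sup>+s\<in>{0..}. g s * ennreal (s ^ (2*n+1)) \<partial>lborel))"
proof -
  have "(\<integral>\<^sup>+w. g (norm w) * ennreal (exp (z \<bullet> w)) \<partial>lborel) =
      (\<integral>\<^sup>+w. (\<Sum>n. g (norm w) * ennreal ((z \<bullet> w) ^ (2*n) / fact (2*n))) \<partial>lborel)"
    unfolding nn_integral_exp_inner_eq_cosh[OF assms]
  proof (intro nn_integral_cong)
    fix w :: "real \<times> real"
    have "ennreal (cosh (z \<bullet> w)) = (\<Sum>n. ennreal ((z \<bullet> w) ^ (2*n) / fact (2*n)))"
      by (rule suminf_ennreal_eq[symmetric]) (simp_all add: cosh_sums_even)
    then show "g (norm w) * ennreal (cosh (z \<bullet> w)) = (\<Sum>n. g (norm w) * ennreal ((z \<bullet> w) ^ (2*n) / fact (2*n)))"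
      by simp
  qed
  also have "\<dots> = (\<Sum>n. \<integral>\<^sup>+w. g (norm w) * ennreal ((z \<bullet> w) ^ (2*n) / fact (2*n)) \<partial>lborel)"
    by (rule nn_integral_suminf) measurable
  also have "\<dots> = (\<Sum>n. ennreal (2 * pi * ((norm z)\<^sup>2 / 4) ^ n / (fact n)\<^sup>2) *
      (\<integral>\<^sup>+s\<in>{0..}. g s * ennreal (s ^ (2*n+1)) \<partial>lborel))"
    by (simp add: nn_integral_radial_inner_power[OF assms])
  finally show ?thesis .
qed

section \<open>The convolution as a series of moments\<close>

(* Condition (1) does not make f measurable; an existing moment does, away from the origin. *)
lemma moment_exists_imp_measurable:
  assumes "moment_exists f n"
  shows "(\<lambda>r. if 0 < r then f r else 0) \<in> borel_measurable borel"
proof -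
  have [measurable]: "(\<lambda>r. indicator {0..} r *\<^sub>R (f r * r ^ (n + 1))) \<in> borel_measurable borel"
    using assms by (auto simp: moment_exists_def set_integrable_def dest: borel_measurable_integrable)
  have "(\<lambda>r. if 0 < r then indicator {0..} r *\<^sub>R (f r * r ^ (n + 1)) / r ^ (n + 1) else 0) \<in> borel_measurable borel"
    by measurable
  also have "(\<lambda>r. if 0 < r then indicator {0..} r *\<^sub>R (f r * r ^ (n + 1)) / r ^ (n + 1) else 0) =
      (\<lambda>r. if 0 < r then f r else 0)"
    by (auto simp: fun_eq_iff)
  finally show ?thesis .
qed

lemma set_integrable_gen_moment:
  assumes "moment_exists f n" and "0 \<le> p"
  shows "set_integrable lborel {0..} (\<lambda>r. f r * r ^ (n + 1) * exp (- p * r\<^sup>2))"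
proof (rule set_integrable_bound)
  show "set_integrable lborel {0..} (\<lambda>r. f r * r ^ (n + 1))"
    using assms(1) by (simp add: moment_exists_def)
  then have [measurable]: "(\<lambda>r. indicator {0..} r *\<^sub>R (f r * r ^ (n + 1))) \<in> borel_measurable borel"
    by (auto simp: set_integrable_def dest: borel_measurable_integrable)
  have "(\<lambda>r. indicator {0..} r *\<^sub>R (f r * r ^ (n + 1)) * exp (- p * r\<^sup>2)) \<in> borel_measurable borel"
    by measurable
  then show "set_borel_measurable lborel {0..} (\<lambda>r. f r * r ^ (n + 1) * exp (- p * r\<^sup>2))"
    by (simp add: set_borel_measurable_def mult.assoc)
  show "AE r in lborel. r \<in> {0..} \<longrightarrow> norm (f r * r ^ (n + 1) * exp (- p * r\<^sup>2)) \<le> norm (f r * r ^ (n + 1))"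
    using assms(2) by (auto simp: abs_mult intro!: mult_left_le)
qed

lemma gen_radial_moment_nonneg:
  assumes "\<And>r. 0 \<le> r \<Longrightarrow> 0 \<le> f r"
  shows "0 \<le> gen_radial_moment f n p"
  unfolding gen_radial_moment_def set_lebesgue_integral_def using assms
  by (auto intro!: integral_nonneg split: split_indicator)

lemma radial_moment_nonneg:
  assumes "\<And>r. 0 \<le> r \<Longrightarrow> 0 \<le> f r"
  shows "0 \<le> radial_moment f n"
  unfolding radial_moment_def set_lebesgue_integral_def using assms
  by (auto intro!: integral_nonneg split: split_indicator)

lemma nn_integral_gen_moment:
  assumes "moment_exists f n" and "0 \<le> p" and "\<And>r. 0 \<le> r \<Longrightarrow> 0 \<le> f r"
    and "\<And>r. 0 < r \<Longrightarrow> h r = f r"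
  shows "(\<integral>\<^sup>+s\<in>{0..}. ennreal (h s * exp (- p * s\<^sup>2)) * ennreal (s ^ (n + 1)) \<partial>lborel) =
    ennreal (gen_radial_moment f n p / (2 * pi))"
proof -
  have "(\<integral>\<^sup>+s\<in>{0..}. ennreal (h s * exp (- p * s\<^sup>2)) * ennreal (s ^ (n + 1)) \<partial>lborel) =
      (\<integral>\<^sup>+s. ennreal (indicator {0..} s *\<^sub>R (f s * s ^ (n + 1) * exp (- p * s\<^sup>2))) \<partial>lborel)"
  proof (intro nn_integral_cong)
    fix s :: real
    show "ennreal (h s * exp (- p * s\<^sup>2)) * ennreal (s ^ (n + 1)) * indicator {0..} s =
        ennreal (indicator {0..} s *\<^sub>R (f s * s ^ (n + 1) * exp (- p * s\<^sup>2)))"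
      using assms(3,4)[of s] by (cases "0 < s") (auto simp: ennreal_mult'' mult_ac split: split_indicator)
  qed
  also have "\<dots> = ennreal (gen_radial_moment f n p / (2 * pi))"
    using set_integrable_gen_moment[OF assms(1,2)] assms(3)
    by (subst nn_integral_eq_integral)
       (auto simp: gen_radial_moment_def set_integrable_def set_lebesgue_integral_def split: split_indicator)
  finally show ?thesis .
qed

lemma conv_beam_nonneg:
  assumes "\<And>r. 0 \<le> r \<Longrightarrow> 0 \<le> f r" and "0 \<le> p"
  shows "0 \<le> conv_beam f p z"
  unfolding conv_beam_def using assms by (auto intro!: integral_nonneg simp: gauss_beam_def)

lemma borel_measurable_gauss_beam_diff [measurable]: "(\<lambda>w. gauss_beam p (z - w)) \<in> borel_measurable borel"
  unfolding gauss_beam_def by (intro borel_measurable_continuous_onI continuous_intros)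

lemma conv_beam_cong_pos:
  assumes [measurable]: "h \<in> borel_measurable borel" and h_eq: "\<And>r. 0 < r \<Longrightarrow> h r = f r"
  shows "conv_beam f p z = conv_beam h p z"
proof -
  have "(\<lambda>w::real \<times> real. if w = 0 then f 0 else h (norm w)) \<in> borel_measurable borel"
    by measurable
  also have "(\<lambda>w::real \<times> real. if w = 0 then f 0 else h (norm w)) = (\<lambda>w. f (norm w))"
    using h_eq by (auto simp: fun_eq_iff)
  finally have [measurable]: "(\<lambda>w::real \<times> real. f (norm w)) \<in> borel_measurable borel" .
  show ?thesis
    unfolding conv_beam_def
    using AE_lborel_singleton[of 0] by (intro integral_cong_AE) (auto simp: h_eq elim!: AE_mp)
qed

lemma gauss_beam_diff:
  "gauss_beam p (z - w) =
    p / pi * exp (- p * (norm z)\<^sup>2) * (exp (- p * (norm w)\<^sup>2) * exp (((2 * p) *\<^sub>R z) \<bullet> w))"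
  by (simp add: gauss_beam_def power2_norm_prod inner_prod_def power2_diff algebra_simps
      flip: exp_add)

lemma conv_beam_eq_nn_integral:
  assumes [measurable]: "h \<in> borel_measurable borel"
    and h_bound: "\<And>r. 0 \<le> h r \<and> h r \<le> F" and "0 < p"
  shows "ennreal (conv_beam h p z) = ennreal (p / pi * exp (- p * (norm z)\<^sup>2)) *
    (\<integral>\<^sup>+w. ennreal (h (norm w) * exp (- p * (norm w)\<^sup>2)) * ennreal (exp (((2 * p) *\<^sub>R z) \<bullet> w)) \<partial>lborel)"
proof -
  have "integrable lborel (\<lambda>w. h (norm w) * gauss_beam p (z - w))"
  proof (rule Bochner_Integration.integrable_bound)
    show "integrable lborel (\<lambda>w. F * gauss_beam p (z - w))"
      using has_bochner_integral_gauss_beam[OF \<open>0 < p\<close>, of z]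
      by (intro integrable_mult_right) (simp add: has_bochner_integral_iff)
    show "AE w in lborel. norm (h (norm w) * gauss_beam p (z - w)) \<le> norm (F * gauss_beam p (z - w))"
    proof (rule AE_I2)
      fix w :: "real \<times> real"
      have "0 \<le> gauss_beam p (z - w)"
        using \<open>0 < p\<close> by (simp add: gauss_beam_def)
      then show "norm (h (norm w) * gauss_beam p (z - w)) \<le> norm (F * gauss_beam p (z - w))"
        using h_bound[of "norm w"] by (simp add: abs_mult mult_right_mono)
    qed
  qed measurable
  then have "ennreal (conv_beam h p z) = (\<integral>\<^sup>+w. ennreal (h (norm w) * gauss_beam p (z - w)) \<partial>lborel)"
    using h_bound \<open>0 < p\<close> by (simp add: conv_beam_def nn_integral_eq_integral gauss_beam_def)
  also have "\<dots> = (\<integral>\<^sup>+w. ennreal (p / pi * exp (- p * (norm z)\<^sup>2)) *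
      (ennreal (h (norm w) * exp (- p * (norm w)\<^sup>2)) * ennreal (exp (((2 * p) *\<^sub>R z) \<bullet> w))) \<partial>lborel)"
  proof (intro nn_integral_cong)
    fix w :: "real \<times> real"
    have c: "0 \<le> p / pi * exp (- p * (norm z)\<^sup>2)" and a: "0 \<le> h (norm w) * exp (- p * (norm w)\<^sup>2)"
      using h_bound[of "norm w"] \<open>0 < p\<close> by auto
    have "h (norm w) * gauss_beam p (z - w) =
        p / pi * exp (- p * (norm z)\<^sup>2) * (h (norm w) * exp (- p * (norm w)\<^sup>2) * exp (((2 * p) *\<^sub>R z) \<bullet> w))"
      by (simp add: gauss_beam_diff mult_ac)
    then show "ennreal (h (norm w) * gauss_beam p (z - w)) = ennreal (p / pi * exp (- p * (norm z)\<^sup>2)) *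
        (ennreal (h (norm w) * exp (- p * (norm w)\<^sup>2)) * ennreal (exp (((2 * p) *\<^sub>R z) \<bullet> w)))"
      by (simp only: ennreal_mult[OF c mult_nonneg_nonneg[OF a exp_ge_zero]] ennreal_mult[OF a exp_ge_zero])
  qed
  also have "\<dots> = ennreal (p / pi * exp (- p * (norm z)\<^sup>2)) *
    (\<integral>\<^sup>+w. ennreal (h (norm w) * exp (- p * (norm w)\<^sup>2)) * ennreal (exp (((2 * p) *\<^sub>R z) \<bullet> w)) \<partial>lborel)"
    by (rule nn_integral_cmult) measurable
  finally show ?thesis .
qed

lemma nn_integral_exp_inner_eq_gen_moment_series:
  fixes f :: "real \<Rightarrow> real" and z :: "real \<times> real"
  assumes nonneg: "\<And>r. 0 \<le> r \<Longrightarrow> 0 \<le> f r" and moments: "\<And>n. moment_exists f (2*n)"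
    and [measurable]: "h \<in> borel_measurable borel" and h_eq: "\<And>r. 0 < r \<Longrightarrow> h r = f r" and "0 < p"
  shows "(\<integral>\<^sup>+w. ennreal (h (norm w) * exp (- p * (norm w)\<^sup>2)) * ennreal (exp (((2 * p) *\<^sub>R z) \<bullet> w)) \<partial>lborel) =
    (\<Sum>n. ennreal (gen_radial_moment f (2*n) p * p ^ (2*n) / (fact n)\<^sup>2 * norm z ^ (2*n)))"
proof -
  have profile [measurable]: "(\<lambda>s. ennreal (h s * exp (- p * s\<^sup>2))) \<in> borel_measurable borel"
    by measurable
  show ?thesis
    unfolding nn_integral_radial_exp_inner[OF profile]
  proof (rule suminf_cong)
    fix n
    define a where "a = 2 * pi * ((norm ((2 * p) *\<^sub>R z))\<^sup>2 / 4) ^ n / (fact n)\<^sup>2"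
    have "0 \<le> a"
      by (simp add: a_def)
    have "((norm ((2 * p) *\<^sub>R z))\<^sup>2 / 4) ^ n = p ^ (2*n) * norm z ^ (2*n)"
      using \<open>0 < p\<close> by (simp add: power_mult_distrib power_mult)
    then have "a * (gen_radial_moment f (2*n) p / (2 * pi)) = gen_radial_moment f (2*n) p * p ^ (2*n) / (fact n)\<^sup>2 * norm z ^ (2*n)"
      by (simp add: a_def)
    then have "ennreal a * ennreal (gen_radial_moment f (2*n) p / (2 * pi)) =
        ennreal (gen_radial_moment f (2*n) p * p ^ (2*n) / (fact n)\<^sup>2 * norm z ^ (2*n))"
      by (simp only: ennreal_mult'[OF \<open>0 \<le> a\<close>, symmetric])
    moreover have "(\<integral>\<^sup>+s\<in>{0..}. ennreal (h s * exp (- p * s\<^sup>2)) * ennreal (s ^ (2*n+1)) \<partial>lborel) =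
        ennreal (gen_radial_moment f (2*n) p / (2 * pi))"
      using nn_integral_gen_moment[OF moments[of n]] \<open>0 < p\<close> nonneg h_eq by simp
    ultimately show "ennreal (2 * pi * ((norm ((2 * p) *\<^sub>R z))\<^sup>2 / 4) ^ n / (fact n)\<^sup>2) *
        (\<integral>\<^sup>+s\<in>{0..}. ennreal (h s * exp (- p * s\<^sup>2)) * ennreal (s ^ (2*n+1)) \<partial>lborel) =
        ennreal (gen_radial_moment f (2*n) p * p ^ (2*n) / (fact n)\<^sup>2 * norm z ^ (2*n))"
      by (simp only: a_def)
  qed
qed

lemma sums_of_ennreal_eq_mult_suminf:
  assumes "\<And>n. 0 \<le> a n" and "0 \<le> s" and "0 < c"
    and eq: "ennreal s = ennreal c * (\<Sum>n. ennreal (a n))"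
  shows "a sums (s / c)"
proof -
  have "(\<Sum>n. ennreal (a n)) = (\<Sum>n. ennreal (a n)) * ennreal c / ennreal c"
    using \<open>0 < c\<close> by (simp add: ennreal_mult_divide_eq)
  also have "\<dots> = ennreal s / ennreal c"
    by (simp only: eq mult.commute)
  also have "\<dots> = ennreal (s / c)"
    using \<open>0 \<le> s\<close> \<open>0 < c\<close> by (rule divide_ennreal)
  finally have "(\<Sum>n. ennreal (a n)) = ennreal (s / c)" .
  moreover have "(\<lambda>n. ennreal (a n)) sums (\<Sum>n. ennreal (a n))"
    by (rule summable_sums) (rule summableI)
  ultimately show ?thesis
    using assms(1-3) by simp
qed

lemma gen_moment_series_sums_conv_beam:
  fixes f :: "real \<Rightarrow> real" and z :: "real \<times> real"
  assumes bound: "\<And>r. 0 \<le> r \<Longrightarrow> 0 \<le> f r \<and> f r \<le> F"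
    and moments: "\<And>n. moment_exists f (2*n)" and "0 < p"
  shows "(\<lambda>n. gen_radial_moment f (2*n) p * p ^ (2*n) / (fact n)\<^sup>2 * norm z ^ (2*n)) sums
    (conv_beam f p z / (p / pi * exp (- p * (norm z)\<^sup>2)))"
proof -
  define h where "h r = (if 0 < r then f r else 0)" for r
  have h_meas: "h \<in> borel_measurable borel"
    using moment_exists_imp_measurable[OF moments[of 0]] by (simp add: h_def[abs_def])
  have h_bound: "0 \<le> h r \<and> h r \<le> F" for r
    using bound[of r] bound[of 0] by (auto simp: h_def)
  have h_eq: "0 < r \<Longrightarrow> h r = f r" for r
    by (simp add: h_def)
  have nonneg: "0 \<le> r \<Longrightarrow> 0 \<le> f r" for r
    using bound by blast
  have "ennreal (conv_beam f p z) = ennreal (p / pi * exp (- p * (norm z)\<^sup>2)) *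
      (\<Sum>n. ennreal (gen_radial_moment f (2*n) p * p ^ (2*n) / (fact n)\<^sup>2 * norm z ^ (2*n)))"
    using conv_beam_eq_nn_integral[OF h_meas h_bound \<open>0 < p\<close>, of z]
    by (simp only: conv_beam_cong_pos[OF h_meas h_eq]
        nn_integral_exp_inner_eq_gen_moment_series[OF nonneg moments h_meas h_eq \<open>0 < p\<close>])
  moreover have "0 \<le> gen_radial_moment f (2*n) p * p ^ (2*n) / (fact n)\<^sup>2 * norm z ^ (2*n)" for n
    using gen_radial_moment_nonneg[OF nonneg] \<open>0 < p\<close> by simp
  moreover have "0 \<le> conv_beam f p z"
    using nonneg \<open>0 < p\<close> by (intro conv_beam_nonneg) auto
  moreover have "0 < p / pi * exp (- p * (norm z)\<^sup>2)"
    using \<open>0 < p\<close> by simp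
  ultimately show ?thesis
    by (intro sums_of_ennreal_eq_mult_suminf)
qed

section \<open>The Laguerre expansion\<close>

lemma power_div_fact_le_exp:
  assumes "0 \<le> (x::real)"
  shows "x ^ k / fact k \<le> exp x"
proof -
  have "(\<lambda>k. x ^ k / fact k) sums exp x"
    using exp_converges[of x] by (simp add: divide_inverse mult.commute)
  then show ?thesis
    using assms sum_le_suminf[of "\<lambda>k. x ^ k / fact k" "{k}"] by (simp add: sums_iff)
qed

lemma abs_laguerre_le:
  assumes "0 \<le> x"
  shows "\<bar>laguerre n x\<bar> \<le> 2 ^ n * exp x"
proof -
  have "\<bar>laguerre n x\<bar> \<le> (\<Sum>k\<le>n. \<bar>(-1) ^ k * real (n choose k) * x ^ k / fact k\<bar>)"
    unfolding laguerre_def by (rule sum_abs)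
  also have "\<dots> = (\<Sum>k\<le>n. real (n choose k) * (x ^ k / fact k))"
    using assms by (simp add: abs_mult)
  also have "\<dots> \<le> (\<Sum>k\<le>n. real (n choose k) * exp x)"
    using assms by (intro sum_mono mult_left_mono power_div_fact_le_exp) auto
  also have "\<dots> = 2 ^ n * exp x"
    by (simp add: sum_distrib_right[symmetric] of_nat_sum[symmetric] choose_row_sum)
  finally show ?thesis .
qed

lemma abs_laguerre_term_le:
  assumes "0 \<le> x" and "0 \<le> y"
  shows "\<bar>(-1) ^ n * y ^ n / fact n * laguerre n x\<bar> \<le> exp x * ((2 * y) ^ n / fact n)"
proof -
  have "\<bar>(-1) ^ n * y ^ n / fact n * laguerre n x\<bar> = y ^ n / fact n * \<bar>laguerre n x\<bar>"
    using assms(2) by (simp add: abs_mult)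
  also have "\<dots> \<le> y ^ n / fact n * (2 ^ n * exp x)"
    using abs_laguerre_le[OF assms(1)] assms(2) by (intro mult_left_mono) auto
  also have "\<dots> = exp x * ((2 * y) ^ n / fact n)"
    by (simp add: power_mult_distrib)
  finally show ?thesis .
qed

lemma summable_power_div_fact_sq: "summable (\<lambda>n. (x::real) ^ n / (fact n)\<^sup>2)"
proof (rule summable_comparison_test)
  show "summable (\<lambda>n. \<bar>x\<bar> ^ n / fact n)"
    using exp_converges[of "\<bar>x\<bar>"] by (simp add: sums_iff divide_inverse mult.commute)
  show "\<exists>N. \<forall>n\<ge>N. norm (x ^ n / (fact n)\<^sup>2) \<le> \<bar>x\<bar> ^ n / fact n"
    by (auto simp: power_abs power2_eq_square divide_le_eq mult_le_cancel_left1 intro!: exI[of _ 0])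
qed

lemma laguerre_generating_sums:
  "(\<lambda>n. (-1) ^ n * y ^ n / fact n * laguerre n x) sums (exp (- y) * (\<Sum>n. (x * y) ^ n / (fact n)\<^sup>2))"
proof -
  define a where "a k = (- y) ^ k / fact k" for k
  define b where "b k = (x * y) ^ k / (fact k)\<^sup>2" for k
  have "summable (\<lambda>k. norm (a k))"
    using exp_converges[of "\<bar>y\<bar>"] by (simp add: a_def sums_iff divide_inverse mult.commute power_abs abs_mult)
  moreover have "summable (\<lambda>k. norm (b k))"
    using summable_power_div_fact_sq[of "\<bar>x * y\<bar>"] by (simp add: b_def power_abs)
  ultimately have "(\<lambda>k. \<Sum>i\<le>k. a i * b (k - i)) sums (suminf a * suminf b)"
    by (rule Cauchy_product_sums)
  moreover have "suminf a = exp (- y)"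
    using exp_converges[of "- y"] by (simp add: a_def[abs_def] sums_iff divide_inverse mult.commute)
  moreover have "(\<Sum>i\<le>k. a i * b (k - i)) = (-1) ^ k * y ^ k / fact k * laguerre k x" for k
  proof -
    have "(\<Sum>i\<le>k. a i * b (k - i)) = (\<Sum>j\<le>k. a (k - j) * b j)"
      by (rule sum.reindex_bij_witness[where i="\<lambda>i. k - i" and j="\<lambda>i. k - i"]) auto
    also have "\<dots> = (\<Sum>j\<le>k. (-1) ^ k * y ^ k / fact k * ((-1) ^ j * real (k choose j) * x ^ j / fact j))"
    proof (rule sum.cong[OF refl])
      fix j assume "j \<in> {..k}"
      then have j: "j \<le> k" by simp
      have "(-1::real) ^ k = (-1) ^ (k - j) * (-1) ^ j" and "y ^ k = y ^ (k - j) * y ^ j"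
        using j by (simp_all flip: power_add)
      moreover have "real (k choose j) = fact k / (fact j * fact (k - j))"
        using j by (rule binomial_fact)
      moreover have "(-1::real) ^ j * (-1) ^ j = 1"
        by (simp flip: power_add)
      ultimately show "a (k - j) * b j = (-1) ^ k * y ^ k / fact k * ((-1) ^ j * real (k choose j) * x ^ j / fact j)"
        by (simp add: a_def b_def power_minus' power_mult_distrib power2_eq_square field_simps)
    qed
    also have "\<dots> = (-1) ^ k * y ^ k / fact k * laguerre k x"
      by (simp add: laguerre_def sum_distrib_left)
    finally show ?thesis .
  qed
  ultimately show ?thesis
    by (simp add: b_def[abs_def])
qed

lemma summable_even_div_fact_of_root_o_sqrt:
  fixes c :: "nat \<Rightarrow> real"
  assumes nonneg: "\<And>n. 0 \<le> c n" and growth: "(\<lambda>n. c n powr (1 / real n)) \<in> o(\<lambda>n. sqrt (real n))"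
    and "0 < q"
  shows "summable (\<lambda>n. c (2*n) * q ^ n / fact n)"
proof -
  \<comment> \<open>\<open>\<epsilon>\<close> makes \<open>2 * \<epsilon>\<^sup>2 * q * exp 1 = 1/2\<close>; the factor \<open>exp 1\<close> absorbs \<open>n ^ n / fact n \<le> exp n\<close>.\<close>
  define \<epsilon> where "\<epsilon> = sqrt (1 / (4 * q * exp 1))"
  have "0 < \<epsilon>" and \<epsilon>: "2 * \<epsilon>\<^sup>2 * q * exp 1 = 1 / 2"
    using \<open>0 < q\<close> by (simp_all add: \<epsilon>_def)
  have root_bound: "\<forall>\<^sub>F m in sequentially. c m \<le> (\<epsilon> * sqrt (real m)) ^ m"
    using landau_o.smallD[OF growth \<open>0 < \<epsilon>\<close>] eventually_ge_at_top[of 1]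
  proof eventually_elim
    case (elim m)
    have "c m = (c m powr (1 / real m)) ^ m"
      using elim(2) nonneg[of m] by (simp add: powr_realpow'[symmetric] powr_powr)
    also have "\<dots> \<le> (\<epsilon> * sqrt (real m)) ^ m"
      using elim(1) by (intro power_mono) auto
    finally show ?case .
  qed
  have "\<forall>\<^sub>F n in sequentially. norm (c (2*n) * q ^ n / fact n) \<le> (1 / 2) ^ n"
    using eventually_compose_filterlim[OF root_bound, of "\<lambda>n. 2*n"]
  proof (rule eventually_mono)
    show "filterlim (\<lambda>n::nat. 2*n) sequentially sequentially"
      by (intro filterlim_subseq) (simp add: strict_mono_def)
    fix n assume "c (2*n) \<le> (\<epsilon> * sqrt (real (2*n))) ^ (2*n)"
    moreover have "(\<epsilon> * sqrt (real (2*n)))\<^sup>2 = 2 * \<epsilon>\<^sup>2 * real n"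
      by (simp add: power_mult_distrib)
    ultimately have "c (2*n) \<le> (2 * \<epsilon>\<^sup>2 * real n) ^ n"
      by (simp only: power_mult)
    then have "norm (c (2*n) * q ^ n / fact n) \<le> (2 * \<epsilon>\<^sup>2 * real n) ^ n * q ^ n / fact n"
      using nonneg[of "2*n"] \<open>0 < q\<close> by (simp add: divide_right_mono mult_right_mono)
    also have "\<dots> = (2 * \<epsilon>\<^sup>2 * q) ^ n * (real n ^ n / fact n)"
      by (simp add: power_mult_distrib)
    also have "\<dots> \<le> (2 * \<epsilon>\<^sup>2 * q) ^ n * exp (real n)"
      using \<open>0 < q\<close> by (intro mult_left_mono power_div_fact_le_exp) auto
    also have "\<dots> = (2 * \<epsilon>\<^sup>2 * q * exp 1) ^ n"
      using exp_of_nat_mult[of n "1::real"] by (simp add: power_mult_distrib)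
    also have "\<dots> = (1 / 2) ^ n"
      by (simp only: \<epsilon>)
    finally show "norm (c (2*n) * q ^ n / fact n) \<le> (1 / 2) ^ n" .
  qed
  then show ?thesis
    by (rule summable_comparison_test_ev) simp
qed

lemma summable_abs_laguerre_moment_series:
  assumes nonneg: "\<And>r. 0 \<le> r \<Longrightarrow> 0 \<le> f r" and growth: "cond2b f" and "0 \<le> x" and "0 < p"
  shows "summable (\<lambda>n. \<bar>(-1) ^ n * radial_moment f (2*n) * p ^ n / fact n * laguerre n x\<bar>)"
proof (rule summable_comparison_test'[where N=0])
  show "summable (\<lambda>n. exp x * (radial_moment f (2*n) * (2 * p) ^ n / fact n))"
    using growth \<open>0 < p\<close> radial_moment_nonneg[OF nonneg]
    by (intro summable_mult summable_even_div_fact_of_root_o_sqrt) (auto simp: cond2b_def)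
  fix n
  have "\<bar>(-1) ^ n * radial_moment f (2*n) * p ^ n / fact n * laguerre n x\<bar> =
      radial_moment f (2*n) * \<bar>(-1) ^ n * p ^ n / fact n * laguerre n x\<bar>"
    using radial_moment_nonneg[OF nonneg] by (simp add: abs_mult)
  also have "\<dots> \<le> radial_moment f (2*n) * (exp x * ((2 * p) ^ n / fact n))"
    using radial_moment_nonneg[OF nonneg] \<open>0 \<le> x\<close> \<open>0 < p\<close>
    by (intro mult_left_mono abs_laguerre_term_le) auto
  finally show "norm \<bar>(-1) ^ n * radial_moment f (2*n) * p ^ n / fact n * laguerre n x\<bar> \<le>
      exp x * (radial_moment f (2*n) * (2 * p) ^ n / fact n)"
    by (simp add: mult_ac)
qed

definition bessel_i0 :: "real \<Rightarrow> real" where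
  "bessel_i0 t = (\<Sum>n. (t / 2) ^ (2*n) / (fact n)\<^sup>2)"

lemma bessel_i0_sums: "(\<lambda>n. (t / 2) ^ (2*n) / (fact n)\<^sup>2) sums bessel_i0 t"
  unfolding bessel_i0_def power_mult by (rule summable_sums[OF summable_power_div_fact_sq])

lemma laguerre_bessel_sums:
  "(\<lambda>n. (-1) ^ n * (p * s\<^sup>2) ^ n / fact n * laguerre n (p * r\<^sup>2)) sums
    (exp (- p * s\<^sup>2) * bessel_i0 (2 * p * r * s))"
proof -
  have "(x\<^sup>2) ^ n = (x ^ n)\<^sup>2" for x :: real
    by (simp flip: power_mult add: mult.commute)
  then have "(\<Sum>n. (p * r\<^sup>2 * (p * s\<^sup>2)) ^ n / (fact n)\<^sup>2) = bessel_i0 (2 * p * r * s)"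
    by (simp add: bessel_i0_def power_mult power_mult_distrib power2_eq_square mult_ac)
  then show ?thesis
    using laguerre_generating_sums[of "p * s\<^sup>2" "p * r\<^sup>2"] by simp
qed

lemma sums_integral_of_abs_summable:
  fixes u :: "nat \<Rightarrow> 'a \<Rightarrow> real"
  assumes "\<And>n. integrable M (u n)" and "\<And>x. (\<lambda>n. u n x) sums S x"
    and "\<And>x. summable (\<lambda>n. \<bar>u n x\<bar>)" and "summable (\<lambda>n. \<integral>x. \<bar>u n x\<bar> \<partial>M)"
  shows "(\<lambda>n. \<integral>x. u n x \<partial>M) sums (\<integral>x. S x \<partial>M)"
proof -
  have "(\<lambda>x. \<Sum>n. u n x) = S"
    using assms(2) by (simp add: fun_eq_iff sums_iff)
  then show ?thesis
    using sums_integral[of M u] assms(1,3,4) by simp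
qed

lemma gen_moment_series_sums_bessel_integral:
  fixes f :: "real \<Rightarrow> real"
  assumes bound: "\<And>r. 0 \<le> r \<Longrightarrow> 0 \<le> f r \<and> f r \<le> F"
    and moments: "\<And>n. moment_exists f (2*n)" and "0 < p"
  shows "(\<lambda>n. gen_radial_moment f (2*n) p * p ^ (2*n) / (fact n)\<^sup>2 * r ^ (2*n)) sums
    (\<integral>s. 2 * pi * (indicator {0..} s * f s * s) * exp (- p * s\<^sup>2) * bessel_i0 (2 * p * r * s) \<partial>lborel)"
proof -
  define u where "u n s = 2 * pi * (indicator {0..} s * f s * s) * exp (- p * s\<^sup>2) * ((p * r * s) ^ (2*n) / (fact n)\<^sup>2)"
    for n s
  have u_nonneg: "0 \<le> u n s" for n s
    using bound[of s] by (simp add: u_def power_mult split: split_indicator)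
  have u_eq: "u n = (\<lambda>s. (2 * pi * (p * r) ^ (2*n) / (fact n)\<^sup>2) *
      (indicator {0..} s *\<^sub>R (f s * s ^ (2*n + 1) * exp (- p * s\<^sup>2))))" for n
    by (simp add: u_def fun_eq_iff power_mult_distrib field_simps split: split_indicator)
  have integrable: "integrable lborel (u n)" for n
    using set_integrable_gen_moment[OF moments[of n]] \<open>0 < p\<close> by (simp add: u_eq set_integrable_def)
  have integral: "(\<integral>s. u n s \<partial>lborel) = gen_radial_moment f (2*n) p * p ^ (2*n) / (fact n)\<^sup>2 * r ^ (2*n)" for n
    by (simp add: u_eq gen_radial_moment_def set_lebesgue_integral_def power_mult_distrib)
  have summable: "summable (\<lambda>n. gen_radial_moment f (2*n) p * p ^ (2*n) / (fact n)\<^sup>2 * r ^ (2*n))"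
    using gen_moment_series_sums_conv_beam[OF bound moments \<open>0 < p\<close>, of "(r, 0)"]
    by (simp add: sums_iff power_even_abs)
  have "(\<lambda>n. \<integral>s. u n s \<partial>lborel) sums
      (\<integral>s. 2 * pi * (indicator {0..} s * f s * s) * exp (- p * s\<^sup>2) * bessel_i0 (2 * p * r * s) \<partial>lborel)"
  proof (rule sums_integral_of_abs_summable[OF integrable])
    show "(\<lambda>n. u n s) sums (2 * pi * (indicator {0..} s * f s * s) * exp (- p * s\<^sup>2) * bessel_i0 (2 * p * r * s))" for s
      using sums_mult[OF bessel_i0_sums[of "2 * p * r * s"], of "2 * pi * (indicator {0..} s * f s * s) * exp (- p * s\<^sup>2)"]
      by (simp add: u_def mult.assoc)
    then show "summable (\<lambda>n. \<bar>u n s\<bar>)" for s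
      using u_nonneg by (simp add: sums_iff)
    show "summable (\<lambda>n. \<integral>s. \<bar>u n s\<bar> \<partial>lborel)"
      using summable u_nonneg by (simp add: integral)
  qed
  then show ?thesis
    by (simp add: integral)
qed

lemma laguerre_series_sums_bessel_integral:
  fixes f :: "real \<Rightarrow> real"
  assumes nonneg: "\<And>r. 0 \<le> r \<Longrightarrow> 0 \<le> f r" and growth: "cond2b f" and "0 < p"
  shows "(\<lambda>n. (-1) ^ n * radial_moment f (2*n) * p ^ n / fact n * laguerre n (p * r\<^sup>2)) sums
    (\<integral>s. 2 * pi * (indicator {0..} s * f s * s) * exp (- p * s\<^sup>2) * bessel_i0 (2 * p * r * s) \<partial>lborel)"
proof -
  define x where "x = p * r\<^sup>2"
  have "0 \<le> x"
    using \<open>0 < p\<close> by (simp add: x_def)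
  define \<rho> where "\<rho> s = 2 * pi * (indicator {0..} s * f s * s)" for s
  have \<rho>_nonneg: "0 \<le> \<rho> s" for s
    using nonneg[of s] by (simp add: \<rho>_def split: split_indicator)
  have power_sq: "(s\<^sup>2) ^ n = (s ^ n)\<^sup>2" for s :: real and n
    by (simp flip: power_mult add: mult.commute)
  define v where "v n s = \<rho> s * ((-1) ^ n * (p * s\<^sup>2) ^ n / fact n * laguerre n x)" for n s
  have v_eq: "v n = (\<lambda>s. (2 * pi * (-1) ^ n * p ^ n / fact n * laguerre n x) *
      (indicator {0..} s *\<^sub>R (f s * s ^ (2*n + 1))))" for n
    by (simp add: v_def \<rho>_def fun_eq_iff power_mult_distrib power_mult power_sq field_simps split: split_indicator)
  have abs_v_eq: "(\<lambda>s. \<bar>v n s\<bar>) = (\<lambda>s. (2 * pi * p ^ n / fact n * \<bar>laguerre n x\<bar>) *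
      (indicator {0..} s *\<^sub>R (f s * s ^ (2*n + 1))))" for n
    using nonneg \<open>0 < p\<close>
    by (simp add: v_def \<rho>_def fun_eq_iff abs_mult power_mult_distrib power_mult power_sq field_simps split: split_indicator)
  have "(\<lambda>n. \<integral>s. v n s \<partial>lborel) sums (\<integral>s. \<rho> s * exp (- p * s\<^sup>2) * bessel_i0 (2 * p * r * s) \<partial>lborel)"
  proof (rule sums_integral_of_abs_summable)
    show "integrable lborel (v n)" for n
      using growth by (simp add: v_eq cond2b_def moment_exists_def set_integrable_def)
    fix s :: real
    show "(\<lambda>n. v n s) sums (\<rho> s * exp (- p * s\<^sup>2) * bessel_i0 (2 * p * r * s))"
      using sums_mult[OF laguerre_bessel_sums[of p s r], of "\<rho> s"]
      by (simp add: v_def x_def mult.assoc)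
    have "summable (\<lambda>n. \<rho> s * (exp x * ((2 * (p * s\<^sup>2)) ^ n / fact n)))"
      using exp_converges[of "2 * (p * s\<^sup>2)"]
      by (intro summable_mult) (simp add: sums_iff divide_inverse mult.commute)
    then show "summable (\<lambda>n. \<bar>v n s\<bar>)"
    proof (rule summable_comparison_test'[where N=0])
      fix n
      have "\<bar>v n s\<bar> = \<rho> s * \<bar>(-1) ^ n * (p * s\<^sup>2) ^ n / fact n * laguerre n x\<bar>"
        using \<rho>_nonneg[of s] by (simp add: v_def abs_mult)
      also have "\<dots> \<le> \<rho> s * (exp x * ((2 * (p * s\<^sup>2)) ^ n / fact n))"
        using \<open>0 < p\<close> by (intro mult_left_mono[OF abs_laguerre_term_le[OF \<open>0 \<le> x\<close>] \<rho>_nonneg]) simp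
      finally show "norm \<bar>v n s\<bar> \<le> \<rho> s * (exp x * ((2 * (p * s\<^sup>2)) ^ n / fact n))"
        by simp
    qed
  next
    have "(\<integral>s. \<bar>v n s\<bar> \<partial>lborel) = \<bar>(-1) ^ n * radial_moment f (2*n) * p ^ n / fact n * laguerre n x\<bar>" for n
    proof -
      have "(\<integral>s. \<bar>v n s\<bar> \<partial>lborel) = p ^ n / fact n * \<bar>laguerre n x\<bar> * radial_moment f (2*n)"
        by (simp add: abs_v_eq radial_moment_def set_lebesgue_integral_def)
      also have "\<dots> = \<bar>(-1) ^ n * radial_moment f (2*n) * p ^ n / fact n * laguerre n x\<bar>"
        using radial_moment_nonneg[of f "2*n", OF nonneg] \<open>0 < p\<close> by (simp add: abs_mult)
      finally show ?thesis .
    qed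
    then show "summable (\<lambda>n. \<integral>s. \<bar>v n s\<bar> \<partial>lborel)"
      using summable_abs_laguerre_moment_series[OF nonneg growth \<open>0 \<le> x\<close> \<open>0 < p\<close>] by simp
  qed
  moreover have "(\<integral>s. v n s \<partial>lborel) = (-1) ^ n * radial_moment f (2*n) * p ^ n / fact n * laguerre n x" for n
    by (simp add: v_eq radial_moment_def set_lebesgue_integral_def)
  ultimately show ?thesis
    by (simp add: x_def \<rho>_def)
qed

lemma laguerre_series_sums_conv_beam:
  fixes f :: "real \<Rightarrow> real" and z :: "real \<times> real"
  assumes bound: "\<And>r. 0 \<le> r \<Longrightarrow> 0 \<le> f r \<and> f r \<le> F" and growth: "cond2b f" and "0 < p"
  shows "(\<lambda>n. (-1) ^ n * radial_moment f (2*n) * p ^ n / fact n * laguerre n (p * (norm z)\<^sup>2)) sums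
    (conv_beam f p z / (p / pi * exp (- p * (norm z)\<^sup>2)))"
proof -
  have moments: "\<And>n. moment_exists f (2*n)"
    using growth by (simp add: cond2b_def)
  have "(\<lambda>n. gen_radial_moment f (2*n) p * p ^ (2*n) / (fact n)\<^sup>2 * norm z ^ (2*n)) sums
      (\<integral>s. 2 * pi * (indicator {0..} s * f s * s) * exp (- p * s\<^sup>2) * bessel_i0 (2 * p * norm z * s) \<partial>lborel)"
    by (rule gen_moment_series_sums_bessel_integral[OF bound moments \<open>0 < p\<close>])
  then have "(\<integral>s. 2 * pi * (indicator {0..} s * f s * s) * exp (- p * s\<^sup>2) * bessel_i0 (2 * p * norm z * s) \<partial>lborel) =
      conv_beam f p z / (p / pi * exp (- p * (norm z)\<^sup>2))"
    using gen_moment_series_sums_conv_beam[OF bound moments \<open>0 < p\<close>] by (rule sums_unique2)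
  moreover have "(\<lambda>n. (-1) ^ n * radial_moment f (2*n) * p ^ n / fact n * laguerre n (p * (norm z)\<^sup>2)) sums
      (\<integral>s. 2 * pi * (indicator {0..} s * f s * s) * exp (- p * s\<^sup>2) * bessel_i0 (2 * p * norm z * s) \<partial>lborel)"
    using bound growth \<open>0 < p\<close> by (intro laguerre_series_sums_bessel_integral) auto
  ultimately show ?thesis
    by simp
qed

theorem mainTheorem1:
  fixes f :: "real \<Rightarrow> real" and p :: real
  assumes "cond1 f" and "cond2a f" and "p > 0"
  shows "(\<forall>z :: real \<times> real. let r = norm z in
            summable (\<lambda>n. gen_radial_moment f (2 * n) p * p ^ (2 * n) / (fact n)\<^sup>2 * r ^ (2 * n)) \<and>
            conv_beam f p z = p / pi * exp (- p * r\<^sup>2) *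
              (\<Sum>n. gen_radial_moment f (2 * n) p * p ^ (2 * n) / (fact n)\<^sup>2 * r ^ (2 * n)))
       \<and> (cond2b f \<longrightarrow>
          (\<forall>z :: real \<times> real. let r = norm z in
            summable (\<lambda>n. (-1) ^ n * radial_moment f (2 * n) * p ^ n / fact n * laguerre n (p * r\<^sup>2)) \<and>
            conv_beam f p z = p / pi * exp (- p * r\<^sup>2) *
              (\<Sum>n. (-1) ^ n * radial_moment f (2 * n) * p ^ n / fact n * laguerre n (p * r\<^sup>2))))"
proof -
  obtain F where bound: "\<And>r. 0 \<le> r \<Longrightarrow> 0 \<le> f r \<and> f r \<le> F"
    using assms(1) by (auto simp: cond1_def)
  have moments: "\<And>n. moment_exists f (2 * n)"
    using assms(2) by (simp add: cond2a_def)
  show ?thesis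
    unfolding Let_def
    using gen_moment_series_sums_conv_beam[OF bound moments \<open>p > 0\<close>]
      laguerre_series_sums_conv_beam[OF bound _ \<open>p > 0\<close>] \<open>p > 0\<close>
    by (simp add: sums_iff)
qed

end
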